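(* Let $\pi$ be a distribution on $\mathbb{R}^d$ with positive definite covariance $\Sigma$, precision $Q=\Sigma^{-1}=(Q_{ij})_{i,j=1}^s$ in block form. For $w\in\Delta_s:=\{w\in\mathbb{R}^s: w_i>0,\ 1-w_1-\dots-w_s>0\}$ define $$f(w)=\lambda_{\min}(D^{\rm ext}_wQ^{\rm ext}),\quad Q^{\rm ext}=\mathrm{diag}(Q,1),\quad D^{\rm ext}_w=\mathrm{diag}\Big(D_w,\ 1-\sum_{i=1}^sw_i\Big),$$ where $D_w=\mathrm{diag}(w_1(Q_{11})^{-1},\dots,w_s(Q_{ss})^{-1})$. Let $w^\star\in\Delta_s$ be a maximiser of $f$ over $\Delta_s$. Then the pseudo-optimal weights are $p^{\mathrm{opt}}_j=w^\star_j/(w^\star_1+\dots+w^\star_s)$, $j=1,\dots,s$, and $$\mathrm{PG}(p^{\mathrm{opt}})=\frac{f(w^\star)}{w^\star_1+\dots+w^\star_s}.$$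
   Context: For a probability vector $p$ with positive entries, the pseudo-spectral gap is $\mathrm{PG}(p)=\lambda_{\min}(D_pQ)$ with $D_p=\mathrm{diag}(p_1(Q_{11})^{-1},\dots,p_s(Q_{ss})^{-1})$ (block diagonal, $d\times d$), and the pseudo-optimal weights $p^{\mathrm{opt}}$ are the (unique) maximiser of $\mathrm{PG}$ over probability vectors with positive entries. $\lambda_{\min}$ denotes the smallest eigenvalue. *)

theory Defs
  imports "HOL-Analysis.Analysis"
begin

text \<open>Matrices are indexed by a finite type 'n (so d = CARD('n)); the block
structure is given by a surjective map blk :: 'n \<Rightarrow> 'b assigning to each
coordinate its block (s = CARD('b)).\<close>

definition diag_mat :: "('n::finite \<Rightarrow> real) \<Rightarrow> real^'n^'n" where
  "diag_mat v = (\<chi> i j. if i = j then v i else 0)"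

definition block_diag_part :: "('n::finite \<Rightarrow> 'b) \<Rightarrow> real^'n^'n \<Rightarrow> real^'n^'n" where
  "block_diag_part blk Q = (\<chi> j k. if blk j = blk k then Q $ j $ k else 0)"

text \<open>D_w = diag(w_1 (Q_11)^{-1}, ..., w_s (Q_ss)^{-1}); the inverse of the
block-diagonal part is the block-diagonal matrix of the block inverses.\<close>
definition Dmat :: "('n::finite \<Rightarrow> 'b) \<Rightarrow> real^'n^'n \<Rightarrow> ('b \<Rightarrow> real) \<Rightarrow> real^'n^'n" where
  "Dmat blk Q w = diag_mat (\<lambda>j. w (blk j)) ** matrix_inv (block_diag_part blk Q)"

definition lambda_min :: "real^'n^'n \<Rightarrow> real" where
  "lambda_min A = Min {l. \<exists>v. v \<noteq> 0 \<and> A *v v = l *\<^sub>R v}"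

definition PG :: "('n::finite \<Rightarrow> 'b) \<Rightarrow> real^'n^'n \<Rightarrow> ('b \<Rightarrow> real) \<Rightarrow> real" where
  "PG blk Q p = lambda_min (Dmat blk Q p ** Q)"

text \<open>Extended matrices on index type 'n option (None is the extra coordinate).\<close>
definition Qext :: "real^'n^'n \<Rightarrow> real^('n::finite option)^('n option)" where
  "Qext Q = (\<chi> i j. case (i, j) of (Some a, Some b) \<Rightarrow> Q $ a $ b
                                   | (None, None) \<Rightarrow> 1 | _ \<Rightarrow> 0)"

definition Dext :: "('n::finite \<Rightarrow> 'b::finite) \<Rightarrow> real^'n^'n \<Rightarrow> ('b \<Rightarrow> real)
                     \<Rightarrow> real^('n option)^('n option)" where
  "Dext blk Q w = (\<chi> i j. case (i, j) of (Some a, Some b) \<Rightarrow> Dmat blk Q w $ a $ b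
                                   | (None, None) \<Rightarrow> 1 - (\<Sum>i\<in>UNIV. w i) | _ \<Rightarrow> 0)"

definition fext :: "('n::finite \<Rightarrow> 'b::finite) \<Rightarrow> real^'n^'n \<Rightarrow> ('b \<Rightarrow> real) \<Rightarrow> real" where
  "fext blk Q w = lambda_min (Dext blk Q w ** Qext Q)"

definition open_simplex :: "('b::finite \<Rightarrow> real) set" where
  "open_simplex = {w. (\<forall>i. w i > 0) \<and> 1 - (\<Sum>i\<in>UNIV. w i) > 0}"

definition pos_prob_vectors :: "('b::finite \<Rightarrow> real) set" where
  "pos_prob_vectors = {p. (\<forall>i. p i > 0) \<and> (\<Sum>i\<in>UNIV. p i) = 1}"

end

(*
  For weights w > 0, D_w is the inverse of the symmetric positive definite matrix P_w obtained
  from the block-diagonal part of Q by dividing block b by w_b. Hence the spectrum of D_w Q is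
  that of the symmetric definite pencil (Q, P_w): finite, nonempty and positive (the least
  eigenvalue minimises the Rayleigh quotient). So g(w) = lambda_min(D_w Q) is positive and
  homogeneous of degree one, and the extra coordinate gives f(w) = min(1 - |w|, g(w)).

  Along the ray through a probability vector p the value min(1 - c, c g(p)) is largest at
  c = 1 / (1 + g(p)), where it equals g(p) / (1 + g(p)), an increasing function of g(p).
  Thus the maximiser w' of f normalises to a maximiser of g = PG on probability vectors, and
  the two terms of the minimum balance at w', giving PG(p_opt) = f(w') / |w'|.
*)
theory Submission
  imports Defs
begin

section \<open>Symmetric positive definite matrices\<close>

definition pos_def :: "real^'n::finite^'n \<Rightarrow> bool" where
  "pos_def A \<longleftrightarrow> (\<forall>x. x \<noteq> 0 \<longrightarrow> 0 < x \<bullet> (A *v x))"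

lemma matrix_inv_invertible:
  fixes A :: "real^'n::finite^'n"
  assumes "invertible A"
  shows matrix_inv_right: "A ** matrix_inv A = mat 1"
    and matrix_inv_left: "matrix_inv A ** A = mat 1"
proof -
  have "\<exists>A'. A ** A' = mat 1 \<and> A' ** A = mat 1"
    using assms unfolding invertible_def by blast
  from someI_ex[OF this] show "A ** matrix_inv A = mat 1" "matrix_inv A ** A = mat 1"
    unfolding matrix_inv_def by auto
qed

lemma pos_def_imp_nonneg: "pos_def A \<Longrightarrow> 0 \<le> x \<bullet> (A *v x)"
  unfolding pos_def_def by (cases "x = 0") (auto intro: less_imp_le)

lemma pos_def_invertible:
  assumes "pos_def A"
  shows "invertible A"
proof -
  have "\<forall>x. A *v x = 0 \<longrightarrow> x = 0"
    using assms unfolding pos_def_def by (metis inner_zero_right less_irrefl)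
  then show ?thesis
    using matrix_left_invertible_ker invertible_left_inverse by blast
qed

lemma symmetric_inner_swap:
  fixes A :: "real^'n::finite^'n"
  assumes "transpose A = A"
  shows "x \<bullet> (A *v y) = y \<bullet> (A *v x)"
  by (metis assms dot_lmul_matrix inner_commute transpose_matrix_vector)

lemma symmetric_matrix_inv:
  fixes A :: "real^'n::finite^'n"
  assumes "transpose A = A" and "invertible A"
  shows "transpose (matrix_inv A) = matrix_inv A"
proof -
  let ?B = "matrix_inv A"
  have "transpose ?B ** A = mat 1"
    using matrix_inv_right[OF assms(2)] assms(1) by (metis matrix_transpose_mul transpose_mat)
  then have "transpose ?B = transpose ?B ** (A ** ?B)"
    using matrix_inv_right[OF assms(2)] by (simp add: matrix_mul_assoc)
  then show ?thesis
    using \<open>transpose ?B ** A = mat 1\<close> by (simp add: matrix_mul_assoc)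
qed

lemma pos_def_matrix_inv:
  fixes A :: "real^'n::finite^'n"
  assumes "transpose A = A" and "pos_def A"
  shows "pos_def (matrix_inv A)"
  unfolding pos_def_def
proof (intro allI impI)
  fix x :: "real^'n" assume "x \<noteq> 0"
  let ?y = "matrix_inv A *v x"
  have A_y: "A *v ?y = x"
    using matrix_inv_right[OF pos_def_invertible[OF assms(2)]]
    by (simp add: matrix_vector_mul_assoc)
  then have "?y \<noteq> 0" using \<open>x \<noteq> 0\<close> by auto
  then have "0 < ?y \<bullet> (A *v ?y)" using assms(2) unfolding pos_def_def by blast
  then show "0 < x \<bullet> (matrix_inv A *v x)" by (simp add: A_y inner_commute)
qed

lemma symmetric_quadratic_form_add:
  fixes A :: "real^'n::finite^'n"
  assumes "transpose A = A"
  shows "(v + t *\<^sub>R y) \<bullet> (A *v (v + t *\<^sub>R y))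
           = v \<bullet> (A *v v) + 2 * t * (y \<bullet> (A *v v)) + t\<^sup>2 * (y \<bullet> (A *v y))"
  using symmetric_inner_swap[OF assms, of v y]
  by (simp add: algebra_simps inner_add_left inner_add_right power2_eq_square)

text \<open>A positive semidefinite form vanishing at v has v in its kernel: otherwise moving from v
  a little in the direction -A v makes the form negative.\<close>
lemma psd_form_zero_imp_kernel:
  fixes A :: "real^'n::finite^'n"
  assumes sym: "transpose A = A" and psd: "\<And>x. 0 \<le> x \<bullet> (A *v x)"
    and zero: "v \<bullet> (A *v v) = 0"
  shows "A *v v = 0"
proof (rule ccontr)
  assume "A *v v \<noteq> 0"
  define y where "y = A *v v"
  define a where "a = y \<bullet> y"
  define c where "c = y \<bullet> (A *v y)"
  define t where "t = - a / (c + 1)"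
  have "a > 0" and "c \<ge> 0"
    using \<open>A *v v \<noteq> 0\<close> psd[of y] by (simp_all add: a_def c_def y_def)
  have "0 \<le> (v + t *\<^sub>R y) \<bullet> (A *v (v + t *\<^sub>R y))" by (rule psd)
  also have "\<dots> = 2 * t * a + t\<^sup>2 * c"
    by (simp add: symmetric_quadratic_form_add[OF sym] zero a_def c_def y_def)
  also have "\<dots> = - a\<^sup>2 * (c + 2) / (c + 1)\<^sup>2"
  proof -
    have "c + 1 \<noteq> 0" using \<open>c \<ge> 0\<close> by simp
    then show ?thesis
      by (simp add: t_def divide_simps) (simp add: power2_eq_square algebra_simps)
  qed
  also have "\<dots> < 0"
    using \<open>a > 0\<close> \<open>c \<ge> 0\<close> by (simp add: divide_neg_pos)
  finally show False by simp
qed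

section \<open>Eigenvalues and generalised eigenvalues\<close>

definition eigenvalues :: "real^'n::finite^'n \<Rightarrow> real set" where
  "eigenvalues A = {l. \<exists>v. v \<noteq> 0 \<and> A *v v = l *\<^sub>R v}"

definition gen_eigenvalues :: "real^'n::finite^'n \<Rightarrow> real^'n^'n \<Rightarrow> real set" where
  "gen_eigenvalues Q P = {l. \<exists>v. v \<noteq> 0 \<and> Q *v v = l *\<^sub>R (P *v v)}"

lemma lambda_min_eq_Min_eigenvalues: "lambda_min A = Min (eigenvalues A)"
  by (simp add: lambda_min_def eigenvalues_def)

lemma rayleigh_quotient_min_attained:
  fixes Q P :: "real^'n::finite^'n"
  assumes "pos_def P"
  obtains v l where "v \<noteq> 0" "v \<bullet> (Q *v v) = l * (v \<bullet> (P *v v))"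
    "\<And>x. l * (x \<bullet> (P *v x)) \<le> x \<bullet> (Q *v x)"
proof -
  define R where "R x = (x \<bullet> (Q *v x)) / (x \<bullet> (P *v x))" for x :: "real^'n"
  have P_pos: "x \<noteq> 0 \<Longrightarrow> 0 < x \<bullet> (P *v x)" for x
    using assms unfolding pos_def_def by blast
  have "continuous_on (sphere 0 1) R"
    unfolding R_def
    by (intro continuous_intros) (metis P_pos mem_sphere_0 norm_zero zero_neq_one less_irrefl)
  moreover have "sphere (0::real^'n) 1 \<noteq> {}" by simp
  ultimately obtain v where v: "v \<in> sphere 0 1" and v_min: "\<And>y. y \<in> sphere 0 1 \<Longrightarrow> R v \<le> R y"
    using continuous_attains_inf[OF compact_sphere] by blast
  have "R v * (x \<bullet> (P *v x)) \<le> x \<bullet> (Q *v x)" for x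
  proof (cases "x = 0")
    case False
    have "R ((1 / norm x) *\<^sub>R x) = R x"
      using False by (simp add: R_def matrix_vector_mult_scaleR)
    then have "R v \<le> R x" using v_min[of "(1 / norm x) *\<^sub>R x"] False by simp
    then show ?thesis using P_pos[OF False] unfolding R_def by (simp add: pos_le_divide_eq)
  qed simp
  moreover have "v \<noteq> 0" using v by auto
  moreover have "v \<bullet> (Q *v v) = R v * (v \<bullet> (P *v v))"
    using P_pos[OF \<open>v \<noteq> 0\<close>] by (simp add: R_def)
  ultimately show ?thesis using that by blast
qed

lemma gen_eigenvalues_nonempty:
  fixes Q P :: "real^'n::finite^'n"
  assumes "transpose Q = Q" "transpose P = P" "pos_def P"
  shows "gen_eigenvalues Q P \<noteq> {}"
proof -
  obtain v l where v: "v \<noteq> 0" "v \<bullet> (Q *v v) = l * (v \<bullet> (P *v v))"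
    and l: "\<And>x. l * (x \<bullet> (P *v x)) \<le> x \<bullet> (Q *v x)"
    using rayleigh_quotient_min_attained[OF assms(3)] by blast
  let ?A = "Q - l *\<^sub>R P"
  have "transpose ?A = ?A"
    using assms(1,2) by (simp add: transpose_def vec_eq_iff)
  moreover have "0 \<le> x \<bullet> (?A *v x)" for x
    using l[of x] by (simp add: algebra_simps inner_diff_right scaleR_matrix_vector_assoc[symmetric])
  moreover have "v \<bullet> (?A *v v) = 0"
    using v(2) by (simp add: algebra_simps inner_diff_right scaleR_matrix_vector_assoc[symmetric])
  ultimately have "?A *v v = 0" by (rule psd_form_zero_imp_kernel)
  then have "Q *v v = l *\<^sub>R (P *v v)" by (simp add: algebra_simps scaleR_matrix_vector_assoc)
  then show ?thesis using v(1) unfolding gen_eigenvalues_def by blast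
qed

lemma gen_eigenvectors_orthogonal:
  fixes Q P :: "real^'n::finite^'n"
  assumes "transpose Q = Q" "transpose P = P"
    and "Q *v u = l *\<^sub>R (P *v u)" "Q *v v = m *\<^sub>R (P *v v)" "l \<noteq> m"
  shows "u \<bullet> (P *v v) = 0"
proof -
  have "m * (u \<bullet> (P *v v)) = u \<bullet> (Q *v v)" using assms(4) by simp
  also have "\<dots> = v \<bullet> (Q *v u)" by (rule symmetric_inner_swap[OF assms(1)])
  also have "\<dots> = l * (u \<bullet> (P *v v))"
    using assms(3) symmetric_inner_swap[OF assms(2), of u v] by simp
  finally show ?thesis using assms(5) by simp
qed

text \<open>Eigenvectors of distinct generalised eigenvalues are orthogonal for the inner product
  given by P, hence linearly independent; so there are at most CARD('n) such eigenvalues.\<close>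
lemma finite_gen_eigenvalues:
  fixes Q P :: "real^'n::finite^'n"
  assumes sym: "transpose Q = Q" "transpose P = P" and pd: "pos_def P"
  shows "finite (gen_eigenvalues Q P)"
proof (rule ccontr)
  assume "infinite (gen_eigenvalues Q P)"
  then obtain F where F: "finite F" "card F = CARD('n) + 1" "F \<subseteq> gen_eigenvalues Q P"
    using infinite_arbitrarily_large by blast
  have "\<forall>l\<in>F. \<exists>v. v \<noteq> 0 \<and> Q *v v = l *\<^sub>R (P *v v)"
    using F(3) unfolding gen_eigenvalues_def by blast
  then obtain ev where ev: "\<And>l. l \<in> F \<Longrightarrow> ev l \<noteq> 0 \<and> Q *v ev l = l *\<^sub>R (P *v ev l)"
    by metis
  have orth: "ev l \<bullet> (P *v ev m) = 0" if "l \<in> F" "m \<in> F" "l \<noteq> m" for l m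
    using gen_eigenvectors_orthogonal[OF sym] ev that by blast
  have nz: "0 < ev l \<bullet> (P *v ev l)" if "l \<in> F" for l
    using pd ev[OF that] unfolding pos_def_def by blast
  have inj: "inj_on ev F"
    by (rule inj_onI) (metis orth nz less_irrefl)
  have "independent (ev ` F)"
  proof (rule real_vector.independent_if_scalars_zero)
    show "finite (ev ` F)" using F(1) by simp
    fix f x assume sum0: "(\<Sum>y\<in>ev ` F. f y *\<^sub>R y) = 0" and x: "x \<in> ev ` F"
    have "0 = (\<Sum>y\<in>ev ` F. f y *\<^sub>R y) \<bullet> (P *v x)" using sum0 by simp
    also have "\<dots> = (\<Sum>y\<in>ev ` F. if y = x then f x * (x \<bullet> (P *v x)) else 0)"
      unfolding inner_sum_left using x orth by (intro sum.cong) auto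
    also have "\<dots> = f x * (x \<bullet> (P *v x))" using F(1) x by simp
    moreover have "0 < x \<bullet> (P *v x)" using x nz by blast
    ultimately show "f x = 0" by simp
  qed
  then have "card (ev ` F) \<le> CARD('n)" using independent_bound by fastforce
  then show False using card_image[OF inj] F(2) by simp
qed

lemma gen_eigenvalues_pos:
  assumes "pos_def Q" "pos_def P" "l \<in> gen_eigenvalues Q P"
  shows "l > 0"
proof -
  obtain v where v: "v \<noteq> 0" "Q *v v = l *\<^sub>R (P *v v)"
    using assms(3) unfolding gen_eigenvalues_def by auto
  then have "v \<bullet> (Q *v v) = l * (v \<bullet> (P *v v))" by simp
  then show ?thesis
    using assms(1,2) v(1) unfolding pos_def_def by (metis zero_less_mult_pos2)
qed

lemma eigenvalues_mult_eq_gen_eigenvalues: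
  fixes D P Q :: "real^'n::finite^'n"
  assumes "D ** P = mat 1" "P ** D = mat 1"
  shows "eigenvalues (D ** Q) = gen_eigenvalues Q P"
proof -
  have "(D ** Q) *v v = l *\<^sub>R v \<longleftrightarrow> Q *v v = l *\<^sub>R (P *v v)" for v l
  proof
    assume "(D ** Q) *v v = l *\<^sub>R v"
    then have "P *v (D *v (Q *v v)) = P *v (l *\<^sub>R v)" by (simp add: matrix_vector_mul_assoc)
    then show "Q *v v = l *\<^sub>R (P *v v)"
      by (simp add: matrix_vector_mul_assoc matrix_mul_assoc assms(2) matrix_vector_mult_scaleR)
  next
    assume "Q *v v = l *\<^sub>R (P *v v)"
    then have "D *v (Q *v v) = D *v (l *\<^sub>R (P *v v))" by simp
    then show "(D ** Q) *v v = l *\<^sub>R v"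
      by (simp add: matrix_vector_mul_assoc matrix_mul_assoc assms(1) matrix_vector_mult_scaleR)
  qed
  then show ?thesis unfolding eigenvalues_def gen_eigenvalues_def by blast
qed

lemma eigenvalues_scaleR:
  fixes A :: "real^'n::finite^'n"
  assumes "c \<noteq> 0"
  shows "eigenvalues (c *\<^sub>R A) = (\<lambda>l. c * l) ` eigenvalues A"
proof -
  have "(c *\<^sub>R A) *v v = l *\<^sub>R v \<longleftrightarrow> A *v v = (l / c) *\<^sub>R v" for v l
  proof -
    have "(c *\<^sub>R A) *v v = l *\<^sub>R v \<longleftrightarrow> c *\<^sub>R (A *v v) = l *\<^sub>R v"
      by (simp add: scaleR_matrix_vector_assoc)
    also have "\<dots> \<longleftrightarrow> A *v v = (l / c) *\<^sub>R v"
    proof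
      assume h: "c *\<^sub>R (A *v v) = l *\<^sub>R v"
      have "A *v v = (1 / c) *\<^sub>R (c *\<^sub>R (A *v v))" using assms by simp
      then show "A *v v = (l / c) *\<^sub>R v" by (simp add: h)
    next
      assume "A *v v = (l / c) *\<^sub>R v"
      then show "c *\<^sub>R (A *v v) = l *\<^sub>R v" using assms by simp
    qed
    finally show ?thesis .
  qed
  then have eig: "l \<in> eigenvalues (c *\<^sub>R A) \<longleftrightarrow> l / c \<in> eigenvalues A" for l
    unfolding eigenvalues_def by blast
  show ?thesis
  proof (intro set_eqI iffI)
    fix l assume "l \<in> eigenvalues (c *\<^sub>R A)"
    then show "l \<in> (\<lambda>l. c * l) ` eigenvalues A"
      using eig assms by (intro image_eqI[where x = "l / c"]) auto
  qed (use eig assms in auto)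
qed

lemma lambda_min_scaleR:
  fixes A :: "real^'n::finite^'n"
  assumes "c > 0" "finite (eigenvalues A)" "eigenvalues A \<noteq> {}"
  shows "lambda_min (c *\<^sub>R A) = c * lambda_min A"
proof -
  have "mono (\<lambda>l::real. c * l)" using assms(1) by (simp add: mono_def)
  then show ?thesis
    using assms by (simp add: lambda_min_eq_Min_eigenvalues eigenvalues_scaleR mono_Min_commute)
qed

section \<open>Bordered matrices\<close>

definition extend_mat :: "real^'n::finite^'n \<Rightarrow> real \<Rightarrow> real^('n option)^('n option)" where
  "extend_mat A s = (\<chi> i j. case (i, j) of (Some a, Some b) \<Rightarrow> A $ a $ b
                                    | (None, None) \<Rightarrow> s | _ \<Rightarrow> 0)"

lemma Qext_eq_extend_mat: "Qext Q = extend_mat Q 1"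
  by (simp add: Qext_def extend_mat_def)

lemma Dext_eq_extend_mat: "Dext blk Q w = extend_mat (Dmat blk Q w) (1 - (\<Sum>i\<in>UNIV. w i))"
  by (simp add: Dext_def extend_mat_def)

lemma sum_UNIV_option: "sum f (UNIV :: 'a::finite option set) = f None + (\<Sum>a\<in>UNIV. f (Some a))"
  by (simp add: UNIV_option_conv sum.reindex)

lemma extend_mat_mult: "extend_mat A s ** extend_mat B t = extend_mat (A ** B) (s * t)"
  by (simp add: extend_mat_def matrix_matrix_mult_def sum_UNIV_option vec_eq_iff split: option.split)

lemma extend_mat_mult_vec:
  fixes A :: "real^'n::finite^'n"
  shows "(extend_mat A s *v v) $ Some a = (A *v (\<chi> b. v $ Some b)) $ a"
    and "(extend_mat A s *v v) $ None = s * v $ None"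
  by (simp_all add: extend_mat_def matrix_vector_mult_def sum_UNIV_option)

lemma eigenvalues_extend_mat:
  fixes A :: "real^'n::finite^'n"
  shows "eigenvalues (extend_mat A s) = insert s (eigenvalues A)"
proof -
  define part where "part v = (\<chi> b. v $ Some b)" for v :: "real^('n option)"
  have eig_iff: "extend_mat A s *v v = l *\<^sub>R v
      \<longleftrightarrow> A *v part v = l *\<^sub>R part v \<and> s * v $ None = l * v $ None" for v l
    by (simp add: vec_eq_iff split_option_all extend_mat_mult_vec part_def conj_commute)
  have nonzero_iff: "v \<noteq> 0 \<longleftrightarrow> part v \<noteq> 0 \<or> v $ None \<noteq> 0" for v
    by (auto simp: vec_eq_iff part_def split_option_all)
  show ?thesis
  proof (intro set_eqI iffI)
    fix l assume "l \<in> eigenvalues (extend_mat A s)"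
    then obtain v where "v \<noteq> 0" "extend_mat A s *v v = l *\<^sub>R v"
      unfolding eigenvalues_def by blast
    then show "l \<in> insert s (eigenvalues A)"
      using eig_iff nonzero_iff unfolding eigenvalues_def by fastforce
  next
    fix l assume "l \<in> insert s (eigenvalues A)"
    then consider "l = s" | u where "u \<noteq> 0" "A *v u = l *\<^sub>R u"
      unfolding eigenvalues_def by blast
    then show "l \<in> eigenvalues (extend_mat A s)"
    proof cases
      case 1
      define v :: "real^('n option)" where "v = (\<chi> i. if i = None then 1 else 0)"
      have "part v = 0" "v $ None = 1" by (simp_all add: part_def v_def vec_eq_iff)
      then show ?thesis using 1 eig_iff nonzero_iff unfolding eigenvalues_def by fastforce
    next
      case 2
      define v :: "real^('n option)" where "v = (\<chi> i. case i of None \<Rightarrow> 0 | Some a \<Rightarrow> u $ a)"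
      have "part v = u" "v $ None = 0" by (simp_all add: part_def v_def vec_eq_iff)
      then show ?thesis using 2 eig_iff nonzero_iff unfolding eigenvalues_def by fastforce
    qed
  qed
qed

lemma lambda_min_extend_mat:
  fixes A :: "real^'n::finite^'n"
  assumes "finite (eigenvalues A)" "eigenvalues A \<noteq> {}"
  shows "lambda_min (extend_mat A s) = min s (lambda_min A)"
  using assms by (simp add: lambda_min_eq_Min_eigenvalues eigenvalues_extend_mat)

section \<open>The weight matrix D_w\<close>

definition scaled_block_diag :: "('n::finite \<Rightarrow> 'b) \<Rightarrow> real^'n^'n \<Rightarrow> ('b \<Rightarrow> real) \<Rightarrow> real^'n^'n" where
  "scaled_block_diag blk Q w = (\<chi> j k. if blk j = blk k then Q $ j $ k / w (blk k) else 0)"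

definition block_proj :: "('n::finite \<Rightarrow> 'b) \<Rightarrow> 'b \<Rightarrow> real^'n \<Rightarrow> real^'n" where
  "block_proj blk b x = (\<chi> j. if blk j = b then x $ j else 0)"

lemma scaled_block_diag_quadratic_form:
  fixes Q :: "real^'n::finite^'n" and blk :: "'n \<Rightarrow> 'b::finite"
  shows "x \<bullet> (scaled_block_diag blk Q w *v x)
           = (\<Sum>b\<in>UNIV. block_proj blk b x \<bullet> (Q *v block_proj blk b x) / w b)"
proof -
  let ?t = "\<lambda>j k. x $ j * Q $ j $ k * x $ k"
  have "x \<bullet> (scaled_block_diag blk Q w *v x)
      = (\<Sum>j\<in>UNIV. \<Sum>k\<in>UNIV. if blk j = blk k then ?t j k / w (blk k) else 0)"
    by (simp add: scaled_block_diag_def inner_vec_def matrix_vector_mult_def sum_distrib_left)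
      (intro sum.cong refl; simp)
  also have "\<dots> = (\<Sum>j\<in>UNIV. \<Sum>k\<in>UNIV. \<Sum>b\<in>UNIV. if blk j = b \<and> blk k = b then ?t j k / w b else 0)"
    by (intro sum.cong refl) (auto simp: sum.delta intro!: sum.neutral cong: conj_cong)
  also have "\<dots> = (\<Sum>b\<in>UNIV. \<Sum>j\<in>UNIV. \<Sum>k\<in>UNIV. if blk j = b \<and> blk k = b then ?t j k / w b else 0)"
    by (subst sum.swap) (rule sum.swap)
  also have "\<dots> = (\<Sum>b\<in>UNIV. block_proj blk b x \<bullet> (Q *v block_proj blk b x) / w b)"
    by (intro sum.cong refl)
      (simp add: block_proj_def inner_vec_def matrix_vector_mult_def sum_distrib_left
        sum_divide_distrib, intro sum.cong refl, auto)
  finally show ?thesis .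
qed

lemma pos_def_scaled_block_diag:
  fixes Q :: "real^'n::finite^'n" and blk :: "'n \<Rightarrow> 'b::finite"
  assumes "pos_def Q" "\<And>b. w b > 0"
  shows "pos_def (scaled_block_diag blk Q w)"
  unfolding pos_def_def scaled_block_diag_quadratic_form
proof (intro allI impI)
  fix x :: "real^'n" assume "x \<noteq> 0"
  then obtain j where "x $ j \<noteq> 0" by (auto simp: vec_eq_iff)
  then have "block_proj blk (blk j) x $ j \<noteq> 0" by (simp add: block_proj_def)
  then have "block_proj blk (blk j) x \<noteq> 0" by auto
  then have "0 < block_proj blk (blk j) x \<bullet> (Q *v block_proj blk (blk j) x) / w (blk j)"
    using assms unfolding pos_def_def by simp
  then show "0 < (\<Sum>b\<in>UNIV. block_proj blk b x \<bullet> (Q *v block_proj blk b x) / w b)"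
    using assms by (intro sum_pos2[of UNIV "blk j"]) (auto intro: divide_nonneg_pos pos_def_imp_nonneg)
qed

lemma symmetric_scaled_block_diag:
  fixes Q :: "real^'n::finite^'n"
  assumes "transpose Q = Q"
  shows "transpose (scaled_block_diag blk Q w) = scaled_block_diag blk Q w"
  using assms by (auto simp: scaled_block_diag_def transpose_def vec_eq_iff)

lemma diag_mat_mult: "diag_mat a ** diag_mat b = diag_mat (\<lambda>j. a j * b j)"
proof -
  have "(\<Sum>k\<in>UNIV. (if i = k then a i else 0) * (if k = j then b k else 0))
      = (\<Sum>k\<in>UNIV. if k = i then (if i = j then a i * b i else 0) else 0)" for i j
    by (intro sum.cong) auto
  then show ?thesis by (simp add: diag_mat_def matrix_matrix_mult_def vec_eq_iff)
qed

lemma diag_mat_one: "diag_mat (\<lambda>_. 1) = mat 1"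
  by (simp add: diag_mat_def mat_def)

lemma block_diag_part_mult_diag_mat:
  "block_diag_part blk Q ** diag_mat (\<lambda>j. 1 / w (blk j)) = scaled_block_diag blk Q w"
proof -
  have "(\<Sum>k\<in>UNIV. (if blk i = blk k then Q $ i $ k else 0) * (if k = j then 1 / w (blk k) else 0))
      = (\<Sum>k\<in>UNIV. if k = j then (if blk i = blk j then Q $ i $ j / w (blk j) else 0) else 0)"
    for i j
    by (intro sum.cong) auto
  then show ?thesis
    by (simp add: block_diag_part_def scaled_block_diag_def diag_mat_def matrix_matrix_mult_def
        vec_eq_iff)
qed

lemma Dmat_inverse:
  fixes Q :: "real^'n::finite^'n" and blk :: "'n \<Rightarrow> 'b::finite"
  assumes "pos_def Q" "\<And>b. w b > 0"
  shows "Dmat blk Q w ** scaled_block_diag blk Q w = mat 1"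
    and "scaled_block_diag blk Q w ** Dmat blk Q w = mat 1"
proof -
  let ?B = "block_diag_part blk Q"
  let ?d = "diag_mat (\<lambda>j. w (blk j))" and ?d' = "diag_mat (\<lambda>j. 1 / w (blk j))"
  have "?B = scaled_block_diag blk Q (\<lambda>_. 1)"
    by (simp add: block_diag_part_def scaled_block_diag_def vec_eq_iff)
  then have B: "invertible ?B"
    using pos_def_invertible[OF pos_def_scaled_block_diag[OF assms(1), of "\<lambda>_. 1" blk]] by simp
  have d: "?d ** ?d' = mat 1" "?d' ** ?d = mat 1"
    using assms(2) by (simp_all add: diag_mat_mult diag_mat_one[symmetric] less_imp_neq[symmetric])
  have "Dmat blk Q w ** scaled_block_diag blk Q w = ?d ** (matrix_inv ?B ** ?B) ** ?d'"
    by (simp add: Dmat_def block_diag_part_mult_diag_mat[symmetric] matrix_mul_assoc)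
  then show "Dmat blk Q w ** scaled_block_diag blk Q w = mat 1"
    using B d by (simp add: matrix_inv_left)
  have "scaled_block_diag blk Q w ** Dmat blk Q w = ?B ** (?d' ** ?d) ** matrix_inv ?B"
    by (simp add: Dmat_def block_diag_part_mult_diag_mat[symmetric] matrix_mul_assoc)
  then show "scaled_block_diag blk Q w ** Dmat blk Q w = mat 1"
    using B d by (simp add: matrix_inv_right)
qed

lemma Dmat_scale: "Dmat blk Q (\<lambda>b. c * w b) = c *\<^sub>R Dmat blk Q w"
proof -
  have "diag_mat (\<lambda>j. c * w (blk j)) = c *\<^sub>R diag_mat (\<lambda>j. w (blk j))"
    by (simp add: diag_mat_def vec_eq_iff)
  then show ?thesis by (simp add: Dmat_def scalar_matrix_assoc)
qed

text \<open>For weights w > 0 the spectrum of D_w Q is that of the pencil (Q, D_w^{-1}) of two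
  symmetric positive definite matrices.\<close>
lemma Dmat_mult_spectrum:
  fixes Q :: "real^'n::finite^'n" and blk :: "'n \<Rightarrow> 'b::finite"
  assumes "transpose Q = Q" "pos_def Q" "\<And>b. w b > 0"
  shows "finite (eigenvalues (Dmat blk Q w ** Q))"
    and "eigenvalues (Dmat blk Q w ** Q) \<noteq> {}"
    and "lambda_min (Dmat blk Q w ** Q) > 0"
proof -
  let ?P = "scaled_block_diag blk Q w"
  have P: "transpose ?P = ?P" "pos_def ?P"
    using symmetric_scaled_block_diag pos_def_scaled_block_diag assms by blast+
  have eig: "eigenvalues (Dmat blk Q w ** Q) = gen_eigenvalues Q ?P"
    using Dmat_inverse[OF assms(2,3)] by (rule eigenvalues_mult_eq_gen_eigenvalues)
  show fin: "finite (eigenvalues (Dmat blk Q w ** Q))"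
    unfolding eig using finite_gen_eigenvalues assms(1) P by blast
  show ne: "eigenvalues (Dmat blk Q w ** Q) \<noteq> {}"
    unfolding eig using gen_eigenvalues_nonempty assms(1) P by blast
  show "lambda_min (Dmat blk Q w ** Q) > 0"
    unfolding lambda_min_eq_Min_eigenvalues
    using Min_in[OF fin ne] gen_eigenvalues_pos[OF assms(2) P(2)] eig by simp
qed

lemma PG_scale:
  fixes Q :: "real^'n::finite^'n" and blk :: "'n \<Rightarrow> 'b::finite"
  assumes "transpose Q = Q" "pos_def Q" "\<And>b. w b > 0" "c > 0"
  shows "PG blk Q (\<lambda>b. c * w b) = c * PG blk Q w"
  using assms lambda_min_scaleR[OF assms(4) Dmat_mult_spectrum(1,2)[OF assms(1-3)]]
  by (simp add: PG_def Dmat_scale scalar_matrix_assoc[symmetric])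

lemma PG_pos:
  fixes Q :: "real^'n::finite^'n" and blk :: "'n \<Rightarrow> 'b::finite"
  assumes "transpose Q = Q" "pos_def Q" "\<And>b. w b > 0"
  shows "PG blk Q w > 0"
  using Dmat_mult_spectrum(3)[OF assms] by (simp add: PG_def)

lemma fext_eq_min_PG:
  fixes Q :: "real^'n::finite^'n" and blk :: "'n \<Rightarrow> 'b::finite"
  assumes "transpose Q = Q" "pos_def Q" "\<And>b. w b > 0"
  shows "fext blk Q w = min (1 - (\<Sum>i\<in>UNIV. w i)) (PG blk Q w)"
  using lambda_min_extend_mat[OF Dmat_mult_spectrum(1,2)[OF assms]]
  by (simp add: fext_def PG_def Dext_eq_extend_mat Qext_eq_extend_mat extend_mat_mult)

section \<open>Maximising a capped homogeneous function\<close>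

lemma capped_maximum_bound:
  fixes g :: "('b::finite \<Rightarrow> real) \<Rightarrow> real"
  assumes pos: "\<And>w. \<forall>i. w i > 0 \<Longrightarrow> g w > 0"
    and hom: "\<And>w c. \<forall>i. w i > 0 \<Longrightarrow> c > 0 \<Longrightarrow> g (\<lambda>i. c * w i) = c * g w"
    and max: "\<And>w. w \<in> open_simplex \<Longrightarrow> min (1 - (\<Sum>i\<in>UNIV. w i)) (g w) \<le> M"
    and p: "p \<in> pos_prob_vectors"
  shows "g p / (1 + g p) \<le> M"
proof -
  have p_pos: "\<forall>i. p i > 0" and p_sum: "(\<Sum>i\<in>UNIV. p i) = 1"
    using p unfolding pos_prob_vectors_def by auto
  define c where "c = 1 / (1 + g p)"
  have "g p > 0" using pos p_pos by blast
  then have c: "0 < c" "c < 1" by (simp_all add: c_def)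
  define w where "w = (\<lambda>i. c * p i)"
  have w_sum: "(\<Sum>i\<in>UNIV. w i) = c"
    using p_sum by (simp add: w_def sum_distrib_left[symmetric])
  have "w \<in> open_simplex"
    using c p_pos w_sum by (simp add: open_simplex_def w_def)
  moreover have "1 - c = g p / (1 + g p)" "c * g p = g p / (1 + g p)"
    using \<open>g p > 0\<close> by (simp_all add: c_def field_simps)
  then have "min (1 - (\<Sum>i\<in>UNIV. w i)) (g w) = g p / (1 + g p)"
    using hom[OF p_pos c(1)] w_sum by (simp add: w_def)
  ultimately show ?thesis using max by metis
qed

lemma maximiser_of_capped_homogeneous:
  fixes g :: "('b::finite \<Rightarrow> real) \<Rightarrow> real"
  assumes pos: "\<And>w. \<forall>i. w i > 0 \<Longrightarrow> g w > 0"
    and hom: "\<And>w c. \<forall>i. w i > 0 \<Longrightarrow> c > 0 \<Longrightarrow> g (\<lambda>i. c * w i) = c * g w"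
    and wstar: "wstar \<in> open_simplex"
    and max: "\<And>w. w \<in> open_simplex \<Longrightarrow>
      min (1 - (\<Sum>i\<in>UNIV. w i)) (g w) \<le> min (1 - (\<Sum>i\<in>UNIV. wstar i)) (g wstar)"
  shows "(\<lambda>j. wstar j / (\<Sum>i\<in>UNIV. wstar i)) \<in> pos_prob_vectors
    \<and> (\<forall>p\<in>pos_prob_vectors. g p \<le> g (\<lambda>j. wstar j / (\<Sum>i\<in>UNIV. wstar i)))
    \<and> g (\<lambda>j. wstar j / (\<Sum>i\<in>UNIV. wstar i))
        = min (1 - (\<Sum>i\<in>UNIV. wstar i)) (g wstar) / (\<Sum>i\<in>UNIV. wstar i)"
proof -
  define t where "t = (\<Sum>i\<in>UNIV. wstar i)"
  define p where "p j = wstar j / t" for j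
  define G where "G = g p"
  have wstar_pos: "\<And>i. wstar i > 0" and "t < 1"
    using wstar unfolding open_simplex_def t_def by auto
  then have "t > 0" unfolding t_def by (simp add: sum_pos)
  have p_pos: "\<forall>i. p i > 0" using wstar_pos \<open>t > 0\<close> by (simp add: p_def)
  have "p \<in> pos_prob_vectors"
    using p_pos \<open>t > 0\<close> by (simp add: pos_prob_vectors_def p_def t_def sum_divide_distrib[symmetric])
  have "G > 0" unfolding G_def using pos p_pos by blast
  have "wstar = (\<lambda>i. t * p i)" using \<open>t > 0\<close> by (simp add: p_def)
  then have g_wstar: "g wstar = t * G" using hom[OF p_pos \<open>t > 0\<close>] by (simp add: G_def)
  have bound: "g q / (1 + g q) \<le> min (1 - t) (t * G)" if "q \<in> pos_prob_vectors" for q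
    using capped_maximum_bound[of g "min (1 - t) (g wstar)" q, OF pos hom _ that] max g_wstar
    unfolding t_def by simp
  from bound[OF \<open>p \<in> pos_prob_vectors\<close>] have "G / (1 + G) \<le> 1 - t" "G / (1 + G) \<le> t * G"
    by (simp_all add: G_def)
  then have "t * (1 + G) \<le> 1" "G * 1 \<le> G * (t * (1 + G))"
    using \<open>G > 0\<close> by (simp_all add: field_simps)
  then have balance: "t * (1 + G) = 1"
    using \<open>G > 0\<close> by (simp only: mult_le_cancel_left_pos)
  have "g q \<le> G" if q: "q \<in> pos_prob_vectors" for q
  proof -
    have "t * G = G / (1 + G)"
      using balance \<open>G > 0\<close> by (simp add: field_simps)
    then have "g q / (1 + g q) \<le> G / (1 + G)"
      using bound[OF q] by simp
    moreover have "g q > 0" using q pos unfolding pos_prob_vectors_def by blast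
    ultimately show ?thesis using \<open>G > 0\<close> by (simp add: field_simps)
  qed
  moreover have "G = min (1 - t) (g wstar) / t"
    using balance g_wstar \<open>t > 0\<close> by (simp add: field_simps)
  ultimately show ?thesis
    using \<open>p \<in> pos_prob_vectors\<close> unfolding p_def G_def t_def by blast
qed

theorem proposition2:
  fixes Sigma :: "real^'n::finite^'n"
    and blk :: "'n \<Rightarrow> 'b::finite"
    and wstar :: "'b \<Rightarrow> real"
  assumes blk_surj: "surj blk"
    and Sigma_sym: "transpose Sigma = Sigma"
    and Sigma_pd: "\<And>x. x \<noteq> 0 \<Longrightarrow> x \<bullet> (Sigma *v x) > 0"
    and wstar_in: "wstar \<in> open_simplex"
    and wstar_max: "\<And>w. w \<in> open_simplex \<Longrightarrow>
                        fext blk (matrix_inv Sigma) w \<le> fext blk (matrix_inv Sigma) wstar"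
  shows "(\<lambda>j. wstar j / (\<Sum>i\<in>UNIV. wstar i)) \<in> pos_prob_vectors
    \<and> (\<forall>p\<in>pos_prob_vectors. PG blk (matrix_inv Sigma) p
          \<le> PG blk (matrix_inv Sigma) (\<lambda>j. wstar j / (\<Sum>i\<in>UNIV. wstar i)))
    \<and> PG blk (matrix_inv Sigma) (\<lambda>j. wstar j / (\<Sum>i\<in>UNIV. wstar i))
        = fext blk (matrix_inv Sigma) wstar / (\<Sum>i\<in>UNIV. wstar i)"
proof -
  \<comment> \<open>The argument does not use blk_surj.\<close>
  let ?Q = "matrix_inv Sigma"
  have "pos_def Sigma" using Sigma_pd by (simp add: pos_def_def)
  then have Q: "transpose ?Q = ?Q" "pos_def ?Q"
    using Sigma_sym pos_def_invertible symmetric_matrix_inv pos_def_matrix_inv by blast+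
  have fext_eq: "fext blk ?Q w = min (1 - (\<Sum>i\<in>UNIV. w i)) (PG blk ?Q w)"
    if "w \<in> open_simplex" for w
    using that by (intro fext_eq_min_PG[OF Q]) (simp add: open_simplex_def)
  have pos: "PG blk ?Q w > 0" if "\<forall>i. w i > 0" for w
    using PG_pos[OF Q] that by blast
  have hom: "PG blk ?Q (\<lambda>i. c * w i) = c * PG blk ?Q w" if "\<forall>i. w i > 0" "c > 0" for w c
    using PG_scale[OF Q] that by blast
  have max: "min (1 - (\<Sum>i\<in>UNIV. w i)) (PG blk ?Q w)
      \<le> min (1 - (\<Sum>i\<in>UNIV. wstar i)) (PG blk ?Q wstar)" if "w \<in> open_simplex" for w
    using wstar_max[OF that] fext_eq[OF that] fext_eq[OF wstar_in] by simp
  show ?thesis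
    unfolding fext_eq[OF wstar_in]
    by (rule maximiser_of_capped_homogeneous[OF pos hom wstar_in max])
qed

end
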